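(* There is a unique family $\{\Lambda_M\}_{M\in\mathcal{M}}$ of bijections $\Lambda_M:\mathcal{B}(M)\to\mathcal{S}_{\mathsf{lex}}(M)$ such that for every $M\in\mathcal{M}$ with nonempty ground set, with $m=m(M)$ the largest element of its ground set, and every $B\in\mathcal{B}(M)$: \begin{align*} \Lambda_M(B)&\subseteq B,\\ \Lambda_M(B)&=\Lambda_{M\backslash m}(B) &&\text{if } m\notin B,\\ \Lambda_M(B)\setminus\{m\}&=\Lambda_{M/m}(B\setminus\{m\}) &&\text{if } m\in B. \end{align*}
   Context: $\mathcal{M}$ is the collection of all matroids whose ground set is a finite subset of $\mathbb{N}$; $\mathcal{B}(M)$ is the set of bases of $M$. For $M$ on ground set $E$, $V_M=\{\mathbf{e}_B : B\in\mathcal{B}(M)\}\subseteq\{0,1\}^E$ ($\mathbf{e}_B$ the characteristic vector), $I(V_M)\subseteq\mathbb{R}[x_e:e\in E]$ its vanishing ideal, and with respect to the lexicographic term order with $x_e\succ x_f$ for $e<f$, the lexicographic standard complex is $\mathcal{S}_{\mathsf{lex}}(M)=\{\tau\subseteq E:\prod_{i\in\tau}x_i\notin \mathrm{in}(I(V_M))\}$. If $E=\emptyset$ then $\mathcal{B}(M)=\mathcal{S}_{\mathsf{lex}}(M)=\{\emptyset\}$. $M\backslash m$, $M/m$ denote deletion and contraction. *)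

theory Defs
  imports Complex_Main "HOL-Library.Poly_Mapping"
begin

type_synonym matroid = "nat set \<times> nat set set"  (* (ground set E, set of bases) *)

definition ground :: "matroid \<Rightarrow> nat set" where "ground M = fst M"
definition bases :: "matroid \<Rightarrow> nat set set" where "bases M = snd M"

definition is_matroid :: "matroid \<Rightarrow> bool" where
  "is_matroid M \<longleftrightarrow> finite (ground M) \<and> bases M \<noteq> {} \<and>
     (\<forall>B\<in>bases M. B \<subseteq> ground M) \<and>
     (\<forall>B1\<in>bases M. \<forall>B2\<in>bases M. \<forall>x\<in>B1 - B2. \<exists>y\<in>B2 - B1. insert y (B1 - {x}) \<in> bases M)"

text \<open>Deletion and contraction of an element m (standard, via bases; loops/coloops handled).\<close>
definition deletion :: "matroid \<Rightarrow> nat \<Rightarrow> matroid" where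
  "deletion M m = (ground M - {m},
     if (\<forall>B\<in>bases M. m \<in> B) then (\<lambda>B. B - {m}) ` bases M
     else {B \<in> bases M. m \<notin> B})"

definition contraction :: "matroid \<Rightarrow> nat \<Rightarrow> matroid" where
  "contraction M m = (ground M - {m},
     if (\<forall>B\<in>bases M. m \<notin> B) then bases M
     else (\<lambda>B. B - {m}) ` {B \<in> bases M. m \<in> B})"

type_synonym monom = "nat \<Rightarrow>\<^sub>0 nat"
type_synonym mpoly = "monom \<Rightarrow>\<^sub>0 real"

definition poly_ring :: "nat set \<Rightarrow> mpoly set" where
  "poly_ring E = {p. \<forall>\<alpha>\<in>Poly_Mapping.keys p. Poly_Mapping.keys \<alpha> \<subseteq> E}"

definition eval_mpoly :: "mpoly \<Rightarrow> (nat \<Rightarrow> real) \<Rightarrow> real" where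
  "eval_mpoly p v = (\<Sum>\<alpha>\<in>Poly_Mapping.keys p. Poly_Mapping.lookup p \<alpha> * (\<Prod>i\<in>Poly_Mapping.keys \<alpha>. v i ^ Poly_Mapping.lookup \<alpha> i))"

definition char_vec :: "nat set \<Rightarrow> nat \<Rightarrow> real" where
  "char_vec B = (\<lambda>i. if i \<in> B then 1 else 0)"

definition vanishing_ideal :: "matroid \<Rightarrow> mpoly set" where
  "vanishing_ideal M = {p \<in> poly_ring (ground M). \<forall>B\<in>bases M. eval_mpoly p (char_vec B) = 0}"

text \<open>Lexicographic order with x_e > x_f for e < f: alpha < beta iff at the smallest
  index where they differ, beta has the larger exponent.\<close>
definition lex_less :: "monom \<Rightarrow> monom \<Rightarrow> bool" where
  "lex_less \<alpha> \<beta> \<longleftrightarrow> (\<exists>i. Poly_Mapping.lookup \<alpha> i < Poly_Mapping.lookup \<beta> i \<and> (\<forall>j<i. Poly_Mapping.lookup \<alpha> j = Poly_Mapping.lookup \<beta> j))"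

definition lead_monom :: "mpoly \<Rightarrow> monom" where
  "lead_monom p = (THE \<alpha>. \<alpha> \<in> Poly_Mapping.keys p \<and> (\<forall>\<beta>\<in>Poly_Mapping.keys p. \<beta> \<noteq> \<alpha> \<longrightarrow> lex_less \<beta> \<alpha>))"

definition monomial_poly :: "monom \<Rightarrow> mpoly" where
  "monomial_poly \<alpha> = Poly_Mapping.single \<alpha> 1"

definition ideal_gen :: "nat set \<Rightarrow> mpoly set \<Rightarrow> mpoly set" where
  "ideal_gen E G = {(\<Sum>g\<in>T. r g * g) | T r. finite T \<and> T \<subseteq> G \<and> (\<forall>g\<in>T. r g \<in> poly_ring E)}"

definition initial_ideal :: "nat set \<Rightarrow> mpoly set \<Rightarrow> mpoly set" where
  "initial_ideal E I = ideal_gen E {monomial_poly (lead_monom f) | f. f \<in> I \<and> f \<noteq> 0}"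

definition sqfree_monom :: "nat set \<Rightarrow> monom" where
  "sqfree_monom \<tau> = (\<Sum>i\<in>\<tau>. Poly_Mapping.single i 1)"

definition S_lex :: "matroid \<Rightarrow> nat set set" where
  "S_lex M = {\<tau>. \<tau> \<subseteq> ground M \<and>
      monomial_poly (sqfree_monom \<tau>) \<notin> initial_ideal (ground M) (vanishing_ideal M)}"

definition good_family :: "(matroid \<Rightarrow> nat set \<Rightarrow> nat set) \<Rightarrow> bool" where
  "good_family \<Lambda> \<longleftrightarrow> (\<forall>M. is_matroid M \<longrightarrow>
     bij_betw (\<Lambda> M) (bases M) (S_lex M) \<and>
     (ground M \<noteq> {} \<longrightarrow> (let m = Max (ground M) in \<forall>B\<in>bases M.
         \<Lambda> M B \<subseteq> B \<and>
         (m \<notin> B \<longrightarrow> \<Lambda> M B = \<Lambda> (deletion M m) B) \<and>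
         (m \<in> B \<longrightarrow> \<Lambda> M B - {m} = \<Lambda> (contraction M m) (B - {m})))))"

end

(*
  Evaluating on the characteristic vectors of the bases turns the squarefree monomial x^\<sigma>
  into the function B \<mapsto> [\<sigma> \<subseteq> B]. Since leading monomials dividing a squarefree monomial are
  squarefree, x^\<sigma> lies in the lexicographic initial ideal iff this function is, on the bases,
  a linear combination of the functions of lex-smaller sets; so S_lex(M) depends only on the
  family of bases and is computed combinatorially.

  Split the bases at the largest element m into those avoiding m (the deletion) and those
  containing m, with m removed (the contraction). For m \<notin> \<sigma>, the set \<sigma> is standard iff it is
  standard for the deletion or for the contraction, and \<sigma> \<union> {m} is standard iff it is standard
  for both. Hence the bijections of the two minors glue to a bijection: a basis B \<ni> m goes to
  \<tau> \<union> {m} with \<tau> = \<Lambda>_{M/m}(B - {m}) when that set is standard, and to \<tau> otherwise. Any family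
  with the stated recursion must make the same choices, because when \<tau> \<union> {m} is standard the
  set \<tau> is also standard for the deletion and is therefore already the image of a basis
  avoiding m.
*)
theory Submission
  imports Defs "HOL-Library.Function_Algebras"
begin

text \<open>Function spaces have no \<^class>\<open>real_vector\<close> instance, so spans of real-valued
  functions are taken in this interpretation.\<close>

interpretation fun_vector: vector_space "\<lambda>(c::real) (f::'a \<Rightarrow> real) x. c * f x"
  by unfold_locales (simp_all add: fun_eq_iff plus_fun_def algebra_simps)

definition set_lex_less :: "nat set \<Rightarrow> nat set \<Rightarrow> bool" where
  "set_lex_less \<rho> \<sigma> \<longleftrightarrow> (\<exists>i. i \<in> \<sigma> \<and> i \<notin> \<rho> \<and> (\<forall>j<i. j \<in> \<rho> \<longleftrightarrow> j \<in> \<sigma>))"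

lemma set_lex_less_Un:
  assumes "set_lex_less \<rho> \<sigma>" "D \<inter> \<sigma> = {}"
  shows "set_lex_less (\<rho> \<union> D) (\<sigma> \<union> D)"
proof -
  obtain i where "i \<in> \<sigma>" "i \<notin> \<rho>" "\<forall>j<i. j \<in> \<rho> \<longleftrightarrow> j \<in> \<sigma>"
    using assms(1) by (auto simp: set_lex_less_def)
  then show ?thesis
    using assms(2) unfolding set_lex_less_def by (intro exI[of _ i]) auto
qed

lemma set_lex_less_cong_below:
  assumes "set_lex_less \<rho> \<sigma>" "\<sigma> \<subseteq> {..<m}"
    and "\<rho>' \<inter> {..<m} = \<rho> \<inter> {..<m}" "\<sigma>' \<inter> {..<m} = \<sigma>"
  shows "set_lex_less \<rho>' \<sigma>'"
proof -
  obtain i where i: "i \<in> \<sigma>" "i \<notin> \<rho>" "\<forall>j<i. j \<in> \<rho> \<longleftrightarrow> j \<in> \<sigma>"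
    using assms(1) by (auto simp: set_lex_less_def)
  have "i < m" using i(1) assms(2) by auto
  have same: "(j \<in> \<rho>' \<longleftrightarrow> j \<in> \<rho>) \<and> (j \<in> \<sigma>' \<longleftrightarrow> j \<in> \<sigma>)" if "j < m" for j
    using assms(3,4) that by blast
  show ?thesis
    unfolding set_lex_less_def
    using i same \<open>i < m\<close> by (intro exI[of _ i]) auto
qed

lemma set_lex_less_Diff_upper: "set_lex_less \<rho> \<sigma> \<Longrightarrow> \<sigma> \<subseteq> {..<m} \<Longrightarrow> set_lex_less (\<rho> - {m}) \<sigma>"
  by (rule set_lex_less_cong_below[of \<rho> \<sigma> m]) auto

lemma set_lex_less_insert_upper_left:
  "set_lex_less \<rho> \<sigma> \<Longrightarrow> \<sigma> \<subseteq> {..<m} \<Longrightarrow> set_lex_less (insert m \<rho>) \<sigma>"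
  by (rule set_lex_less_cong_below[of \<rho> \<sigma> m]) auto

lemma set_lex_less_insert_upper_right:
  "set_lex_less \<rho> \<sigma> \<Longrightarrow> \<sigma> \<subseteq> {..<m} \<Longrightarrow> set_lex_less \<rho> (insert m \<sigma>)"
  by (rule set_lex_less_cong_below[of \<rho> \<sigma> m]) auto

lemma set_lex_less_insert_upper_both:
  "set_lex_less \<rho> \<sigma> \<Longrightarrow> \<sigma> \<subseteq> {..<m} \<Longrightarrow> set_lex_less (insert m \<rho>) (insert m \<sigma>)"
  by (rule set_lex_less_cong_below[of \<rho> \<sigma> m]) auto

lemma set_lex_less_insert_self: "m \<notin> \<sigma> \<Longrightarrow> set_lex_less \<sigma> (insert m \<sigma>)"
  unfolding set_lex_less_def by auto

lemma set_lex_less_insertE: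
  assumes "set_lex_less \<rho> (insert m \<sigma>)" "\<sigma> \<subseteq> {..<m}"
  obtains "set_lex_less \<rho> \<sigma>" | "m \<notin> \<rho>" "\<rho> \<inter> {..<m} = \<sigma>"
proof -
  obtain i where i: "i \<in> insert m \<sigma>" "i \<notin> \<rho>" "\<forall>j<i. j \<in> \<rho> \<longleftrightarrow> j \<in> insert m \<sigma>"
    using assms(1) by (auto simp: set_lex_less_def)
  show ?thesis
  proof (cases "i = m")
    case True
    then have "\<rho> \<inter> {..<m} = \<sigma>" using i(3) assms(2) by auto
    then show ?thesis using that i(2) True by blast
  next
    case False
    then have "i \<in> \<sigma>" "i < m" using i(1) assms(2) by auto
    then have "set_lex_less \<rho> \<sigma>"
      using i unfolding set_lex_less_def by (intro exI[of _ i]) auto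
    then show ?thesis using that by blast
  qed
qed

section \<open>Spans of squarefree monomials on 0/1 points\<close>

text \<open>\<^term>\<open>superset_ind \<rho> B\<close> is the monomial \<open>x\<^sup>\<rho>\<close> evaluated at the characteristic vector of \<open>B\<close>.\<close>

definition superset_ind :: "'a set \<Rightarrow> 'a set \<Rightarrow> real" where
  "superset_ind \<rho> B = (if \<rho> \<subseteq> B then 1 else 0)"

lemma span_superset_ind_comp:
  assumes "f \<in> fun_vector.span (superset_ind ` R)"
    and "\<And>\<rho>. \<rho> \<in> R \<Longrightarrow> (\<lambda>B. w B * superset_ind \<rho> (\<phi> B)) \<in> fun_vector.span (superset_ind ` R')"
  shows "(\<lambda>B. w B * f (\<phi> B)) \<in> fun_vector.span (superset_ind ` R')"
  using assms(1)
proof (induction rule: fun_vector.span_induct_alt)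
  case base
  show ?case using fun_vector.span_zero by (simp add: zero_fun_def)
next
  case (step c x y)
  then obtain \<rho> where "\<rho> \<in> R" "x = superset_ind \<rho>" by blast
  then have "(\<lambda>B. c * (w B * x (\<phi> B))) \<in> fun_vector.span (superset_ind ` R')"
    using assms(2) by (intro fun_vector.span_scale) simp
  then have "(\<lambda>B. c * (w B * x (\<phi> B))) + (\<lambda>B. w B * y (\<phi> B)) \<in> fun_vector.span (superset_ind ` R')"
    using step.IH by (rule fun_vector.span_add)
  then show ?case by (simp add: plus_fun_def algebra_simps)
qed

lemma span_superset_ind_insert:
  assumes "f \<in> fun_vector.span (superset_ind ` R)" "\<And>\<rho>. \<rho> \<in> R \<Longrightarrow> \<rho> - {m} \<in> R'"
  shows "(\<lambda>B. f (insert m B)) \<in> fun_vector.span (superset_ind ` R')"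
proof -
  have "(\<lambda>B. 1 * f (insert m B)) \<in> fun_vector.span (superset_ind ` R')"
  proof (rule span_superset_ind_comp[OF assms(1)])
    fix \<rho> assume "\<rho> \<in> R"
    have "(\<lambda>B. 1 * superset_ind \<rho> (insert m B)) = superset_ind (\<rho> - {m})"
      by (auto simp: superset_ind_def fun_eq_iff)
    then show "(\<lambda>B. 1 * superset_ind \<rho> (insert m B)) \<in> fun_vector.span (superset_ind ` R')"
      using assms(2) \<open>\<rho> \<in> R\<close> by (simp add: fun_vector.span_base)
  qed
  then show ?thesis by simp
qed

lemma span_superset_ind_mult:
  assumes "f \<in> fun_vector.span (superset_ind ` R)" "\<And>\<rho>. \<rho> \<in> R \<Longrightarrow> \<rho> \<union> D \<in> R'"
  shows "(\<lambda>B. superset_ind D B * f B) \<in> fun_vector.span (superset_ind ` R')"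
proof (rule span_superset_ind_comp[OF assms(1), where \<phi> = id, simplified])
  fix \<rho> assume "\<rho> \<in> R"
  have "(\<lambda>B. superset_ind D B * superset_ind \<rho> B) = superset_ind (\<rho> \<union> D)"
    by (auto simp: superset_ind_def fun_eq_iff)
  then show "(\<lambda>B. superset_ind D B * superset_ind \<rho> B) \<in> fun_vector.span (superset_ind ` R')"
    using assms(2) \<open>\<rho> \<in> R\<close> by (simp add: fun_vector.span_base)
qed

lemma span_superset_ind_containing:
  assumes "f \<in> fun_vector.span (superset_ind ` R)" "\<And>\<rho>. \<rho> \<in> R \<Longrightarrow> m \<notin> \<rho> \<Longrightarrow> insert m \<rho> \<in> R'"
  shows "(\<lambda>B. superset_ind {m} B * f (B - {m})) \<in> fun_vector.span (superset_ind ` R')"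
proof (rule span_superset_ind_comp[OF assms(1)])
  fix \<rho> assume "\<rho> \<in> R"
  have "(\<lambda>B. superset_ind {m} B * superset_ind \<rho> (B - {m})) =
      (if m \<in> \<rho> then 0 else superset_ind (insert m \<rho>))"
    by (auto simp: superset_ind_def fun_eq_iff)
  then show "(\<lambda>B. superset_ind {m} B * superset_ind \<rho> (B - {m})) \<in> fun_vector.span (superset_ind ` R')"
    using assms(2) \<open>\<rho> \<in> R\<close>
    by (cases "m \<in> \<rho>") (simp_all add: fun_vector.span_zero fun_vector.span_base)
qed

lemma span_superset_ind_avoiding:
  assumes "f \<in> fun_vector.span (superset_ind ` R)"
    and "\<And>\<rho>. \<rho> \<in> R \<Longrightarrow> m \<notin> \<rho> \<Longrightarrow> \<rho> \<in> R' \<and> insert m \<rho> \<in> R'"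
  shows "(\<lambda>B. (1 - superset_ind {m} B) * f B) \<in> fun_vector.span (superset_ind ` R')"
proof (rule span_superset_ind_comp[OF assms(1), where \<phi> = id, simplified])
  fix \<rho> assume "\<rho> \<in> R"
  have "(\<lambda>B. (1 - superset_ind {m} B) * superset_ind \<rho> B) =
      (if m \<in> \<rho> then 0 else superset_ind \<rho> - superset_ind (insert m \<rho>))"
    by (auto simp: superset_ind_def fun_eq_iff)
  then show "(\<lambda>B. (1 - superset_ind {m} B) * superset_ind \<rho> B) \<in> fun_vector.span (superset_ind ` R')"
    using assms(2) \<open>\<rho> \<in> R\<close>
    by (cases "m \<in> \<rho>") (simp_all add: fun_vector.span_zero fun_vector.span_base fun_vector.span_diff)
qed

abbreviation lex_span :: "nat set \<Rightarrow> (nat set \<Rightarrow> real) set" where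
  "lex_span \<sigma> \<equiv> fun_vector.span (superset_ind ` {\<rho>. set_lex_less \<rho> \<sigma>})"

definition lex_dependent :: "nat set set \<Rightarrow> nat set \<Rightarrow> bool" where
  "lex_dependent Y \<sigma> \<longleftrightarrow> (\<exists>f \<in> lex_span \<sigma>. \<forall>B\<in>Y. superset_ind \<sigma> B = f B)"

definition lex_standard :: "nat set set \<Rightarrow> nat set set" where
  "lex_standard Y = {\<tau>. \<not> lex_dependent Y \<tau>}"

lemma lex_dependentI:
  "f \<in> lex_span \<sigma> \<Longrightarrow> (\<And>B. B \<in> Y \<Longrightarrow> superset_ind \<sigma> B = f B) \<Longrightarrow> lex_dependent Y \<sigma>"
  unfolding lex_dependent_def by blast

lemma lex_dependentE:
  assumes "lex_dependent Y \<sigma>"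
  obtains f where "f \<in> lex_span \<sigma>" "\<forall>B\<in>Y. superset_ind \<sigma> B = f B"
  using assms that unfolding lex_dependent_def by blast

lemma lex_dependent_if_not_subset: "(\<And>B. B \<in> Y \<Longrightarrow> \<not> \<sigma> \<subseteq> B) \<Longrightarrow> lex_dependent Y \<sigma>"
  by (rule lex_dependentI[OF fun_vector.span_zero]) (simp add: superset_ind_def)

lemma lex_dependent_if_exceeds:
  "x \<in> \<sigma> \<Longrightarrow> m < x \<Longrightarrow> (\<And>B. B \<in> Y \<Longrightarrow> B \<subseteq> {..m}) \<Longrightarrow> lex_dependent Y \<sigma>"
  by (rule lex_dependent_if_not_subset) fastforce

lemma lex_dependent_subset: "lex_dependent Y \<sigma> \<Longrightarrow> Y' \<subseteq> Y \<Longrightarrow> lex_dependent Y' \<sigma>"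
  unfolding lex_dependent_def by blast

lemma lex_dependent_mono:
  assumes "lex_dependent Y \<sigma>" "\<sigma> \<subseteq> \<tau>"
  shows "lex_dependent Y \<tau>"
proof -
  obtain f where f: "f \<in> lex_span \<sigma>" "\<forall>B\<in>Y. superset_ind \<sigma> B = f B"
    using assms(1) by (rule lex_dependentE)
  define D where "D = \<tau> - \<sigma>"
  have \<tau>: "\<tau> = \<sigma> \<union> D" "D \<inter> \<sigma> = {}" using assms(2) by (auto simp: D_def)
  show ?thesis
  proof (rule lex_dependentI)
    show "(\<lambda>B. superset_ind D B * f B) \<in> lex_span \<tau>"
      using f(1) by (rule span_superset_ind_mult) (use \<tau> set_lex_less_Un in auto)
    fix B assume "B \<in> Y"
    have "superset_ind \<tau> B = superset_ind D B * superset_ind \<sigma> B"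
      unfolding \<tau>(1) by (auto simp: superset_ind_def)
    then show "superset_ind \<tau> B = superset_ind D B * f B" using f(2) \<open>B \<in> Y\<close> by simp
  qed
qed

lemma lex_standard_subset: "(\<And>B. B \<in> Y \<Longrightarrow> B \<subseteq> E) \<Longrightarrow> \<tau> \<in> lex_standard Y \<Longrightarrow> \<tau> \<subseteq> E"
  unfolding lex_standard_def using lex_dependent_if_not_subset by blast

lemma lex_standard_empty [simp]: "lex_standard {} = {}"
  unfolding lex_standard_def using lex_dependent_if_not_subset by blast

lemma lex_standard_singleton_empty: "lex_standard {{}} = {{}}"
proof -
  have "lex_span {} = {0}"
    by (simp add: set_lex_less_def fun_vector.span_empty)
  then have "\<not> lex_dependent {{}} {}"
    by (auto simp: lex_dependent_def superset_ind_def)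
  moreover have "lex_dependent {{}} \<tau>" if "\<tau> \<noteq> {}" for \<tau>
    using that by (intro lex_dependent_if_not_subset) auto
  ultimately show ?thesis unfolding lex_standard_def by auto
qed

lemma lex_span_insert_split:
  assumes "f \<in> lex_span (insert m \<sigma>)" "\<sigma> \<subseteq> {..<m}"
  shows "\<exists>g\<in>lex_span \<sigma>. \<exists>k. \<forall>B\<subseteq>{..m}. f B = g B + k * superset_ind \<sigma> B"
  using assms(1)
proof (induction rule: fun_vector.span_induct_alt)
  case base
  show ?case by (rule bexI[OF _ fun_vector.span_zero]) auto
next
  case (step c x y)
  then obtain \<rho> where \<rho>: "set_lex_less \<rho> (insert m \<sigma>)" and x: "x = superset_ind \<rho>" by blast
  from step.IH obtain g k where g: "g \<in> lex_span \<sigma>"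
    and y: "\<forall>B\<subseteq>{..m}. y B = g B + k * superset_ind \<sigma> B" by blast
  from \<rho> assms(2) show ?case
  proof (cases rule: set_lex_less_insertE)
    case 1
    have "superset_ind \<rho> \<in> lex_span \<sigma>" using 1 by (intro fun_vector.span_base) auto
    then have "(\<lambda>B. c * superset_ind \<rho> B) + g \<in> lex_span \<sigma>"
      using g by (intro fun_vector.span_add fun_vector.span_scale)
    then show ?thesis using y by (intro bexI[of _ "(\<lambda>B. c * superset_ind \<rho> B) + g"] exI[of _ k]) (auto simp: x)
  next
    case 2
    show ?thesis
    proof (cases "\<rho> = \<sigma>")
      case True
      then show ?thesis using g y by (intro bexI[OF _ g] exI[of _ "k + c"]) (auto simp: x algebra_simps)
    next
      case False
      with 2 have "\<not> \<rho> \<subseteq> {..<m}" by auto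
      then obtain z where z: "z \<in> \<rho>" "\<not> z < m" by blast
      with 2 have "m < z" by (cases "z = m") auto
      with z(1) have "superset_ind \<rho> B = 0" if "B \<subseteq> {..m}" for B
        using that by (auto simp: superset_ind_def)
      then show ?thesis using g y by (intro bexI[OF _ g] exI[of _ k]) (auto simp: x)
    qed
  qed
qed

section \<open>Splitting a set family at its largest element\<close>

definition family_deletion :: "'a set set \<Rightarrow> 'a \<Rightarrow> 'a set set" where
  "family_deletion X m = {B \<in> X. m \<notin> B}"

definition family_contraction :: "'a set set \<Rightarrow> 'a \<Rightarrow> 'a set set" where
  "family_contraction X m = (\<lambda>B. B - {m}) ` {B \<in> X. m \<in> B}"

lemma mem_family_deletion [simp]: "B \<in> family_deletion X m \<longleftrightarrow> B \<in> X \<and> m \<notin> B"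
  by (simp add: family_deletion_def)

lemma mem_family_contraction [simp]: "B \<in> family_contraction X m \<longleftrightarrow> m \<notin> B \<and> insert m B \<in> X"
  unfolding family_contraction_def by (auto simp: insert_absorb intro: image_eqI[of _ _ "insert m B"])

lemma notin_lex_standard_deletion: "\<tau> \<in> lex_standard (family_deletion X m) \<Longrightarrow> m \<notin> \<tau>"
  using lex_standard_subset[of "family_deletion X m" "- {m}"] by auto

lemma notin_lex_standard_contraction: "\<tau> \<in> lex_standard (family_contraction X m) \<Longrightarrow> m \<notin> \<tau>"
  using lex_standard_subset[of "family_contraction X m" "- {m}"] by auto

context
  fixes X :: "nat set set" and m :: nat
  assumes bounded: "\<And>B. B \<in> X \<Longrightarrow> B \<subseteq> {..m}"
begin

lemma lex_dependent_all_if_exceeds: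
  assumes "x \<in> \<sigma>" "m < x"
  shows "lex_dependent X \<sigma>" "lex_dependent (family_deletion X m) \<sigma>"
    "lex_dependent (family_contraction X m) \<sigma>"
proof -
  have "B \<subseteq> {..m}" if "B \<in> family_contraction X m" for B
    using that bounded[of "insert m B"] by simp
  then show "lex_dependent (family_contraction X m) \<sigma>"
    by (rule lex_dependent_if_exceeds[OF assms])
  show "lex_dependent X \<sigma>"
    by (rule lex_dependent_if_exceeds[OF assms bounded])
  show "lex_dependent (family_deletion X m) \<sigma>"
    by (rule lex_dependent_if_exceeds[OF assms]) (simp add: bounded)
qed

context
  fixes \<sigma> :: "nat set"
  assumes below: "\<sigma> \<subseteq> {..<m}"
begin

lemma upper_notin_below: "m \<notin> \<sigma>"
  using below by auto

lemma lex_dependent_contraction_if_avoiding: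
  assumes "lex_dependent X \<sigma>"
  shows "lex_dependent (family_contraction X m) \<sigma>"
proof -
  obtain f where f: "f \<in> lex_span \<sigma>" "\<forall>B\<in>X. superset_ind \<sigma> B = f B"
    using assms by (rule lex_dependentE)
  show ?thesis
  proof (rule lex_dependentI)
    show "(\<lambda>B. f (insert m B)) \<in> lex_span \<sigma>"
      using f(1) by (rule span_superset_ind_insert) (simp add: below set_lex_less_Diff_upper)
    fix B assume "B \<in> family_contraction X m"
    then have "insert m B \<in> X" by simp
    have "superset_ind \<sigma> B = superset_ind \<sigma> (insert m B)"
      using upper_notin_below by (simp add: superset_ind_def subset_insert)
    also have "\<dots> = f (insert m B)" using f(2) \<open>insert m B \<in> X\<close> by blast
    finally show "superset_ind \<sigma> B = f (insert m B)" .
  qed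
qed

lemma lex_dependent_avoiding_if_minors:
  assumes "lex_dependent (family_deletion X m) \<sigma>" "lex_dependent (family_contraction X m) \<sigma>"
  shows "lex_dependent X \<sigma>"
proof -
  obtain f where f: "f \<in> lex_span \<sigma>" "\<forall>B\<in>family_deletion X m. superset_ind \<sigma> B = f B"
    using assms(1) by (rule lex_dependentE)
  obtain g where g: "g \<in> lex_span \<sigma>" "\<forall>B\<in>family_contraction X m. superset_ind \<sigma> B = g B"
    using assms(2) by (rule lex_dependentE)
  show ?thesis
  proof (rule lex_dependentI)
    show "(\<lambda>B. (1 - superset_ind {m} B) * f B) + (\<lambda>B. superset_ind {m} B * g (B - {m})) \<in> lex_span \<sigma>"
      by (intro fun_vector.span_add span_superset_ind_avoiding[OF f(1)] span_superset_ind_containing[OF g(1)])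
        (simp_all add: below set_lex_less_insert_upper_left)
    fix B assume B: "B \<in> X"
    show "superset_ind \<sigma> B = ((\<lambda>B. (1 - superset_ind {m} B) * f B) + (\<lambda>B. superset_ind {m} B * g (B - {m}))) B"
    proof (cases "m \<in> B")
      case True
      then have "B - {m} \<in> family_contraction X m" using B by (simp add: insert_absorb)
      moreover have "superset_ind \<sigma> B = superset_ind \<sigma> (B - {m})"
        using upper_notin_below by (auto simp: superset_ind_def)
      ultimately show ?thesis using g(2) True by (simp add: superset_ind_def)
    next
      case False
      then show ?thesis using f(2) B by (simp add: superset_ind_def)
    qed
  qed
qed

text \<open>On sets bounded by \<open>m\<close>, a combination of sets lex-below \<open>\<sigma> \<union> {m}\<close> is one of sets lex-below
  \<open>\<sigma>\<close> plus \<open>k x\<^sup>\<sigma>\<close>. Evaluating at the bases avoiding \<open>m\<close> shows dependence in the deletion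
  when \<open>k = 1\<close>; evaluating at the bases containing \<open>m\<close> shows dependence in the contraction otherwise.\<close>

lemma lex_dependent_minor_if_containing:
  assumes "lex_dependent X (insert m \<sigma>)"
  shows "lex_dependent (family_deletion X m) \<sigma> \<or> lex_dependent (family_contraction X m) \<sigma>"
proof -
  obtain f where f: "f \<in> lex_span (insert m \<sigma>)" "\<forall>B\<in>X. superset_ind (insert m \<sigma>) B = f B"
    using assms by (rule lex_dependentE)
  obtain g k where g: "g \<in> lex_span \<sigma>" and fg: "\<forall>B\<subseteq>{..m}. f B = g B + k * superset_ind \<sigma> B"
    using lex_span_insert_split[OF f(1) below] by blast
  have f_eq: "superset_ind (insert m \<sigma>) B = g B + k * superset_ind \<sigma> B" if "B \<in> X" for B
    using f(2) fg bounded that by simp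
  show ?thesis
  proof (cases "k = 1")
    case True
    have "lex_dependent (family_deletion X m) \<sigma>"
    proof (rule lex_dependentI)
      show "(\<lambda>B. (-1) * g B) \<in> lex_span \<sigma>" using g by (rule fun_vector.span_scale)
      fix B assume "B \<in> family_deletion X m"
      then have "0 = g B + superset_ind \<sigma> B"
        using f_eq[of B] True by (simp add: superset_ind_def)
      then show "superset_ind \<sigma> B = (-1) * g B" by simp
    qed
    then show ?thesis ..
  next
    case False
    have "lex_dependent (family_contraction X m) \<sigma>"
    proof (rule lex_dependentI)
      have "(\<lambda>B. g (insert m B)) \<in> lex_span \<sigma>"
        using g by (rule span_superset_ind_insert) (simp add: below set_lex_less_Diff_upper)
      then show "(\<lambda>B. 1 / (1 - k) * g (insert m B)) \<in> lex_span \<sigma>"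
        by (rule fun_vector.span_scale)
      fix B assume "B \<in> family_contraction X m"
      then have "superset_ind \<sigma> B = g (insert m B) + k * superset_ind \<sigma> B"
        using f_eq[of "insert m B"] upper_notin_below by (simp add: superset_ind_def subset_insert)
      then show "superset_ind \<sigma> B = 1 / (1 - k) * g (insert m B)"
        using False by (simp add: field_simps)
    qed
    then show ?thesis ..
  qed
qed

lemma lex_dependent_containing_if_deletion:
  assumes "lex_dependent (family_deletion X m) \<sigma>"
  shows "lex_dependent X (insert m \<sigma>)"
proof -
  obtain f where f: "f \<in> lex_span \<sigma>" "\<forall>B\<in>family_deletion X m. superset_ind \<sigma> B = f B"
    using assms by (rule lex_dependentE)
  show ?thesis
  proof (rule lex_dependentI)
    have "superset_ind \<sigma> \<in> lex_span (insert m \<sigma>)"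
      using set_lex_less_insert_self[OF upper_notin_below] by (intro fun_vector.span_base) auto
    then show "superset_ind \<sigma> - (\<lambda>B. (1 - superset_ind {m} B) * f B) \<in> lex_span (insert m \<sigma>)"
      by (intro fun_vector.span_diff span_superset_ind_avoiding[OF f(1)])
        (simp_all add: below set_lex_less_insert_upper_right set_lex_less_insert_upper_both)
    fix B assume "B \<in> X"
    then show "superset_ind (insert m \<sigma>) B = (superset_ind \<sigma> - (\<lambda>B. (1 - superset_ind {m} B) * f B)) B"
      using f(2) by (cases "m \<in> B") (simp_all add: superset_ind_def)
  qed
qed

lemma lex_dependent_containing_if_contraction:
  assumes "lex_dependent (family_contraction X m) \<sigma>"
  shows "lex_dependent X (insert m \<sigma>)"
proof -
  obtain f where f: "f \<in> lex_span \<sigma>" "\<forall>B\<in>family_contraction X m. superset_ind \<sigma> B = f B"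
    using assms by (rule lex_dependentE)
  show ?thesis
  proof (rule lex_dependentI)
    show "(\<lambda>B. superset_ind {m} B * f (B - {m})) \<in> lex_span (insert m \<sigma>)"
      using f(1) by (rule span_superset_ind_containing) (simp add: below set_lex_less_insert_upper_both)
    fix B assume B: "B \<in> X"
    show "superset_ind (insert m \<sigma>) B = superset_ind {m} B * f (B - {m})"
    proof (cases "m \<in> B")
      case True
      then have "B - {m} \<in> family_contraction X m" using B by (simp add: insert_absorb)
      moreover have "superset_ind (insert m \<sigma>) B = superset_ind \<sigma> (B - {m})"
        using True upper_notin_below by (auto simp: superset_ind_def)
      ultimately show ?thesis using f(2) True by (simp add: superset_ind_def)
    qed (simp add: superset_ind_def)
  qed
qed

end

lemma lex_standard_avoiding_iff:
  assumes "m \<notin> \<sigma>"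
  shows "\<sigma> \<in> lex_standard X \<longleftrightarrow>
    \<sigma> \<in> lex_standard (family_deletion X m) \<or> \<sigma> \<in> lex_standard (family_contraction X m)"
proof (cases "\<sigma> \<subseteq> {..<m}")
  case False
  then obtain x where x: "x \<in> \<sigma>" "\<not> x < m" by blast
  with assms have "m < x" by (cases "x = m") auto
  from lex_dependent_all_if_exceeds[OF x(1) this] show ?thesis by (simp add: lex_standard_def)
next
  case True
  have "family_deletion X m \<subseteq> X" by auto
  with True have "lex_dependent X \<sigma> \<longleftrightarrow>
      lex_dependent (family_deletion X m) \<sigma> \<and> lex_dependent (family_contraction X m) \<sigma>"
    using lex_dependent_contraction_if_avoiding lex_dependent_avoiding_if_minors lex_dependent_subset
    by blast
  then show ?thesis by (simp add: lex_standard_def)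
qed

lemma lex_standard_containing_iff:
  assumes "m \<notin> \<sigma>"
  shows "insert m \<sigma> \<in> lex_standard X \<longleftrightarrow>
    \<sigma> \<in> lex_standard (family_deletion X m) \<and> \<sigma> \<in> lex_standard (family_contraction X m)"
proof (cases "\<sigma> \<subseteq> {..<m}")
  case False
  then obtain x where x: "x \<in> \<sigma>" "\<not> x < m" by blast
  with assms have "m < x" by (cases "x = m") auto
  moreover have "lex_dependent X (insert m \<sigma>)"
    using x(1) \<open>m < x\<close> by (intro lex_dependent_all_if_exceeds(1)[of x]) simp_all
  ultimately show ?thesis
    using lex_dependent_all_if_exceeds[OF x(1)] by (simp add: lex_standard_def)
next
  case True
  then show ?thesis
    using lex_dependent_minor_if_containing lex_dependent_containing_if_deletion
      lex_dependent_containing_if_contraction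
    unfolding lex_standard_def by blast
qed

end

definition lex_lift :: "nat set set \<Rightarrow> nat \<Rightarrow> nat set \<Rightarrow> nat set" where
  "lex_lift X m \<tau> = (if \<tau> \<in> lex_standard (family_deletion X m) then insert m \<tau> else \<tau>)"

definition lex_glue ::
    "nat \<Rightarrow> nat set set \<Rightarrow> (nat set \<Rightarrow> nat set) \<Rightarrow> (nat set \<Rightarrow> nat set) \<Rightarrow> nat set \<Rightarrow> nat set" where
  "lex_glue m X L\<^sub>d L\<^sub>c B = (if m \<in> B then lex_lift X m (L\<^sub>c (B - {m})) else L\<^sub>d B)"

lemma lex_lift_Diff: "m \<notin> \<tau> \<Longrightarrow> lex_lift X m \<tau> - {m} = \<tau>"
  by (simp add: lex_lift_def)

lemma inj_on_lex_lift: "inj_on (lex_lift X m) (lex_standard (family_contraction X m))"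
proof (rule inj_onI)
  fix s t assume "s \<in> lex_standard (family_contraction X m)" "t \<in> lex_standard (family_contraction X m)"
    and "lex_lift X m s = lex_lift X m t"
  then show "s = t" using lex_lift_Diff notin_lex_standard_contraction by metis
qed

context
  fixes X :: "nat set set" and m :: nat
  assumes bounded: "\<And>B. B \<in> X \<Longrightarrow> B \<subseteq> {..m}"
begin

lemma lex_standard_split:
  "lex_standard X =
    lex_standard (family_deletion X m) \<union> lex_lift X m ` lex_standard (family_contraction X m)"
proof (intro equalityI subsetI)
  fix \<tau> assume \<tau>: "\<tau> \<in> lex_standard X"
  show "\<tau> \<in> lex_standard (family_deletion X m) \<union> lex_lift X m ` lex_standard (family_contraction X m)"
  proof (cases "m \<in> \<tau>")
    case True
    then have "\<tau> - {m} \<in> lex_standard (family_deletion X m)" "\<tau> - {m} \<in> lex_standard (family_contraction X m)"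
      using \<tau> lex_standard_containing_iff[OF bounded, where \<sigma> = "\<tau> - {m}"] by (simp_all add: insert_absorb)
    moreover have "\<tau> = lex_lift X m (\<tau> - {m})" using calculation(1) True by (simp add: lex_lift_def insert_absorb)
    ultimately show ?thesis by blast
  next
    case False
    then show ?thesis using \<tau> lex_standard_avoiding_iff[OF bounded, where \<sigma> = \<tau>] by (auto simp: lex_lift_def)
  qed
qed (use notin_lex_standard_deletion notin_lex_standard_contraction lex_standard_avoiding_iff[OF bounded]
    lex_standard_containing_iff[OF bounded] in \<open>auto simp: lex_lift_def\<close>)

lemma bij_betw_lex_glue:
  assumes del: "bij_betw L\<^sub>d (family_deletion X m) (lex_standard (family_deletion X m))"
    and con: "bij_betw L\<^sub>c (family_contraction X m) (lex_standard (family_contraction X m))"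
  shows "bij_betw (lex_glue m X L\<^sub>d L\<^sub>c) X (lex_standard X)"
proof -
  have "bij_betw (lex_glue m X L\<^sub>d L\<^sub>c) (family_deletion X m) (lex_standard (family_deletion X m))"
    using del by (rule bij_betw_cong[THEN iffD2, rotated]) (simp add: lex_glue_def)
  moreover have "bij_betw (lex_glue m X L\<^sub>d L\<^sub>c) {B \<in> X. m \<in> B} (lex_lift X m ` lex_standard (family_contraction X m))"
  proof -
    have "bij_betw (\<lambda>B. B - {m}) {B \<in> X. m \<in> B} (family_contraction X m)"
      unfolding family_contraction_def by (rule bij_betw_imageI) (auto simp: inj_on_def)
    from bij_betw_trans[OF bij_betw_trans[OF this con] inj_on_imp_bij_betw[OF inj_on_lex_lift]]
    show ?thesis by (rule bij_betw_cong[THEN iffD1, rotated]) (simp add: lex_glue_def)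
  qed
  moreover have "lex_standard (family_deletion X m) \<inter> lex_lift X m ` lex_standard (family_contraction X m) = {}"
    by (auto simp: lex_lift_def dest: notin_lex_standard_deletion notin_lex_standard_contraction)
  ultimately have "bij_betw (lex_glue m X L\<^sub>d L\<^sub>c) (family_deletion X m \<union> {B \<in> X. m \<in> B})
      (lex_standard (family_deletion X m) \<union> lex_lift X m ` lex_standard (family_contraction X m))"
    by (rule bij_betw_combine)
  moreover have "family_deletion X m \<union> {B \<in> X. m \<in> B} = X" by auto
  ultimately show ?thesis by (simp add: lex_standard_split)
qed

lemma lex_glue_unique:
  assumes bij: "bij_betw \<Lambda> X (lex_standard X)"
    and del: "bij_betw L\<^sub>d (family_deletion X m) (lex_standard (family_deletion X m))"
    and con: "bij_betw L\<^sub>c (family_contraction X m) (lex_standard (family_contraction X m))"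
    and avoiding: "\<And>B. B \<in> X \<Longrightarrow> m \<notin> B \<Longrightarrow> \<Lambda> B = L\<^sub>d B"
    and containing: "\<And>B. B \<in> X \<Longrightarrow> m \<in> B \<Longrightarrow> \<Lambda> B - {m} = L\<^sub>c (B - {m})"
    and B: "B \<in> X"
  shows "\<Lambda> B = lex_glue m X L\<^sub>d L\<^sub>c B"
proof (cases "m \<in> B")
  case False
  then show ?thesis using avoiding B by (simp add: lex_glue_def)
next
  case True
  define \<tau> where "\<tau> = L\<^sub>c (B - {m})"
  have "B - {m} \<in> family_contraction X m" using B True by (simp add: insert_absorb)
  then have "\<tau> \<in> lex_standard (family_contraction X m)" using con by (auto simp: \<tau>_def bij_betw_def)
  then have "m \<notin> \<tau>" by (rule notin_lex_standard_contraction)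
  have \<Lambda>B: "\<Lambda> B = \<tau> \<or> \<Lambda> B = insert m \<tau>"
    using containing[OF B True] \<open>m \<notin> \<tau>\<close> unfolding \<tau>_def[symmetric] by blast
  have "\<Lambda> B \<in> lex_standard X" using bij B by (auto simp: bij_betw_def)
  show ?thesis
  proof (cases "\<tau> \<in> lex_standard (family_deletion X m)")
    case True
    then have "\<tau> \<in> L\<^sub>d ` family_deletion X m" using del by (simp add: bij_betw_def)
    then obtain B' where B': "B' \<in> family_deletion X m" "L\<^sub>d B' = \<tau>" by blast
    have "\<Lambda> B \<noteq> \<tau>"
    proof
      assume "\<Lambda> B = \<tau>"
      then have "\<Lambda> B' = \<Lambda> B" using B' avoiding by auto
      then have "B' = B" using bij B B' by (auto simp: bij_betw_def dest: inj_onD)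
      then show False using B' \<open>m \<in> B\<close> by simp
    qed
    then show ?thesis using \<Lambda>B True \<open>m \<in> B\<close> by (simp add: lex_glue_def lex_lift_def \<tau>_def[symmetric])
  next
    case False
    then have "insert m \<tau> \<notin> lex_standard X" using lex_standard_containing_iff[OF bounded \<open>m \<notin> \<tau>\<close>] by blast
    then show ?thesis
      using \<Lambda>B \<open>\<Lambda> B \<in> lex_standard X\<close> False \<open>m \<in> B\<close>
      by (auto simp: lex_glue_def lex_lift_def \<tau>_def[symmetric])
  qed
qed

end

section \<open>Lexicographic standard monomials of 0/1 points\<close>

lemma lex_less_iff_less: "lex_less \<alpha> \<beta> \<longleftrightarrow> \<alpha> < \<beta>"
  by (simp add: lex_less_def less_poly_mapping.rep_eq less_fun_def)

lemma lead_monom_eq_Max: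
  assumes "p \<noteq> 0"
  shows "lead_monom p = Max (Poly_Mapping.keys p)"
  unfolding lead_monom_def lex_less_iff_less
proof (rule the_equality)
  have "Poly_Mapping.keys p \<noteq> {}" using assms by simp
  then show "Max (Poly_Mapping.keys p) \<in> Poly_Mapping.keys p \<and>
      (\<forall>\<beta>\<in>Poly_Mapping.keys p. \<beta> \<noteq> Max (Poly_Mapping.keys p) \<longrightarrow> \<beta> < Max (Poly_Mapping.keys p))"
    by (auto simp: order.not_eq_order_implies_strict)
  fix \<alpha> assume "\<alpha> \<in> Poly_Mapping.keys p \<and> (\<forall>\<beta>\<in>Poly_Mapping.keys p. \<beta> \<noteq> \<alpha> \<longrightarrow> \<beta> < \<alpha>)"
  then show "\<alpha> = Max (Poly_Mapping.keys p)"
    by (intro Max_eqI[symmetric]) (auto intro: less_imp_le)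
qed

lemma lead_monom_in_keys: "p \<noteq> 0 \<Longrightarrow> lead_monom p \<in> Poly_Mapping.keys p"
  by (simp add: lead_monom_eq_Max)

lemma le_lead_monom:
  assumes "\<beta> \<in> Poly_Mapping.keys p"
  shows "\<beta> \<le> lead_monom p"
proof -
  from assms have "p \<noteq> 0" by auto
  with assms show ?thesis by (simp add: lead_monom_eq_Max)
qed

lemma lookup_sqfree_monom:
  "finite \<sigma> \<Longrightarrow> Poly_Mapping.lookup (sqfree_monom \<sigma>) i = (if i \<in> \<sigma> then 1 else 0)"
  unfolding sqfree_monom_def by (simp add: lookup_sum lookup_single when_def)

lemma keys_sqfree_monom [simp]: "finite \<sigma> \<Longrightarrow> Poly_Mapping.keys (sqfree_monom \<sigma>) = \<sigma>"
  by (auto simp: in_keys_iff lookup_sqfree_monom split: if_splits)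

lemma sqfree_monom_less:
  "finite \<rho> \<Longrightarrow> finite \<sigma> \<Longrightarrow> set_lex_less \<rho> \<sigma> \<Longrightarrow> sqfree_monom \<rho> < sqfree_monom \<sigma>"
  unfolding set_lex_less_def less_poly_mapping.rep_eq less_fun_def by (auto simp: lookup_sqfree_monom)

lemma less_sqfree_monom:
  assumes "\<beta> < sqfree_monom \<sigma>" "finite \<sigma>"
  shows "set_lex_less (Poly_Mapping.keys \<beta>) \<sigma>"
proof -
  obtain i where i: "Poly_Mapping.lookup \<beta> i < (if i \<in> \<sigma> then 1 else 0)"
    and below: "\<forall>j<i. Poly_Mapping.lookup \<beta> j = (if j \<in> \<sigma> then 1 else 0)"
    using assms unfolding less_poly_mapping.rep_eq less_fun_def by (auto simp: lookup_sqfree_monom)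
  from i have "i \<in> \<sigma>" "i \<notin> Poly_Mapping.keys \<beta>" by (auto simp: in_keys_iff split: if_splits)
  moreover have "\<forall>j<i. j \<in> Poly_Mapping.keys \<beta> \<longleftrightarrow> j \<in> \<sigma>" using below by (auto simp: in_keys_iff)
  ultimately show ?thesis unfolding set_lex_less_def by blast
qed

lemma sqfree_monom_summand:
  assumes "sqfree_monom \<tau> = \<gamma> + \<alpha>" "finite \<tau>"
  shows "\<alpha> = sqfree_monom (Poly_Mapping.keys \<alpha>)" "Poly_Mapping.keys \<alpha> \<subseteq> \<tau>"
proof -
  have le: "Poly_Mapping.lookup \<alpha> i \<le> (if i \<in> \<tau> then 1 else 0)" for i
    using arg_cong[OF assms(1), of "\<lambda>p. Poly_Mapping.lookup p i"] assms(2)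
    by (simp add: lookup_add lookup_sqfree_monom)
  show "Poly_Mapping.keys \<alpha> \<subseteq> \<tau>"
    using le by (force simp: in_keys_iff split: if_splits)
  show "\<alpha> = sqfree_monom (Poly_Mapping.keys \<alpha>)"
  proof (rule poly_mapping_eqI)
    fix i
    show "Poly_Mapping.lookup \<alpha> i = Poly_Mapping.lookup (sqfree_monom (Poly_Mapping.keys \<alpha>)) i"
      using le[of i] by (auto simp: lookup_sqfree_monom in_keys_iff split: if_splits)
  qed
qed

lemma eval_mpoly_superset:
  assumes "finite K" "Poly_Mapping.keys p \<subseteq> K"
  shows "eval_mpoly p v =
    (\<Sum>\<alpha>\<in>K. Poly_Mapping.lookup p \<alpha> * (\<Prod>i\<in>Poly_Mapping.keys \<alpha>. v i ^ Poly_Mapping.lookup \<alpha> i))"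
  unfolding eval_mpoly_def using assms by (intro sum.mono_neutral_left) (auto simp: in_keys_iff)

lemma eval_mpoly_add: "eval_mpoly (p + q) v = eval_mpoly p v + eval_mpoly q v"
proof -
  let ?K = "Poly_Mapping.keys p \<union> Poly_Mapping.keys q"
  have "Poly_Mapping.keys (p + q) \<subseteq> ?K" by (rule keys_add)
  then show ?thesis
    by (simp add: eval_mpoly_superset[of ?K] lookup_add algebra_simps sum.distrib)
qed

lemma eval_mpoly_diff: "eval_mpoly (p - q) v = eval_mpoly p v - eval_mpoly q v"
  using eval_mpoly_add[of "p - q" q v] by simp

lemma prod_char_vec:
  "(\<Prod>i\<in>Poly_Mapping.keys \<alpha>. char_vec B i ^ Poly_Mapping.lookup \<alpha> i) = superset_ind (Poly_Mapping.keys \<alpha>) B"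
proof (cases "Poly_Mapping.keys \<alpha> \<subseteq> B")
  case True
  then show ?thesis by (auto simp: char_vec_def superset_ind_def intro!: prod.neutral)
next
  case False
  then obtain i where "i \<in> Poly_Mapping.keys \<alpha>" "i \<notin> B" by blast
  then show ?thesis
    using False by (auto simp: char_vec_def superset_ind_def in_keys_iff intro!: prod_zero bexI[of _ i])
qed

lemma eval_mpoly_char_vec:
  "eval_mpoly p (char_vec B) =
    (\<Sum>\<alpha>\<in>Poly_Mapping.keys p. Poly_Mapping.lookup p \<alpha> * superset_ind (Poly_Mapping.keys \<alpha>) B)"
  by (simp add: eval_mpoly_def prod_char_vec)

lemma eval_mpoly_single_char_vec:
  "eval_mpoly (Poly_Mapping.single \<alpha> c) (char_vec B) = c * superset_ind (Poly_Mapping.keys \<alpha>) B"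
  by (simp add: eval_mpoly_char_vec)

lemma sum_fun_apply: "(\<Sum>a\<in>A. f a) x = (\<Sum>a\<in>A. f a x)"
  by (induction A rule: infinite_finite_induct) simp_all

lemma span_superset_ind_polynomial:
  assumes "g \<in> fun_vector.span (superset_ind ` R)" "finite E"
  shows "\<exists>p. (\<forall>\<alpha>\<in>Poly_Mapping.keys p. \<exists>\<rho>\<in>R. \<rho> \<subseteq> E \<and> \<alpha> = sqfree_monom \<rho>) \<and>
    (\<forall>B\<subseteq>E. eval_mpoly p (char_vec B) = g B)"
  using assms(1)
proof (induction rule: fun_vector.span_induct_alt)
  case base
  show ?case by (intro exI[of _ 0]) (simp add: eval_mpoly_def)
next
  case (step c x g)
  then obtain \<rho> where \<rho>: "\<rho> \<in> R" "x = superset_ind \<rho>" by blast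
  from step.IH obtain p where p: "\<forall>\<alpha>\<in>Poly_Mapping.keys p. \<exists>\<rho>\<in>R. \<rho> \<subseteq> E \<and> \<alpha> = sqfree_monom \<rho>"
    "\<forall>B\<subseteq>E. eval_mpoly p (char_vec B) = g B" by blast
  show ?case
  proof (cases "\<rho> \<subseteq> E")
    case True
    then have "finite \<rho>" using assms(2) by (rule finite_subset)
    let ?q = "p + Poly_Mapping.single (sqfree_monom \<rho>) c"
    have "\<forall>\<alpha>\<in>Poly_Mapping.keys ?q. \<exists>\<rho>\<in>R. \<rho> \<subseteq> E \<and> \<alpha> = sqfree_monom \<rho>"
      using keys_add[of p "Poly_Mapping.single (sqfree_monom \<rho>) c"] p(1) \<rho>(1) True
      by (auto split: if_splits)
    moreover have "\<forall>B\<subseteq>E. eval_mpoly ?q (char_vec B) = ((\<lambda>B. c * x B) + g) B"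
      using p(2) \<rho>(2) \<open>finite \<rho>\<close> by (simp add: eval_mpoly_add eval_mpoly_single_char_vec)
    ultimately show ?thesis by blast
  next
    case False
    then have "\<forall>B\<subseteq>E. x B = 0" using \<rho>(2) by (auto simp: superset_ind_def)
    then show ?thesis using p by (intro exI[of _ p]) simp
  qed
qed

lemma lex_dependent_lead_monom:
  assumes "f \<in> vanishing_ideal M" "f \<noteq> 0" "lead_monom f = sqfree_monom \<sigma>" "finite \<sigma>"
  shows "lex_dependent (bases M) \<sigma>"
proof -
  define c where "c = Poly_Mapping.lookup f (sqfree_monom \<sigma>)"
  define K where "K = Poly_Mapping.keys f - {sqfree_monom \<sigma>}"
  have in_keys: "sqfree_monom \<sigma> \<in> Poly_Mapping.keys f"
    using lead_monom_in_keys[OF assms(2)] assms(3) by simp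
  then have "c \<noteq> 0" by (simp add: c_def in_keys_iff)
  show ?thesis
  proof (rule lex_dependentI)
    have "superset_ind (Poly_Mapping.keys \<beta>) \<in> lex_span \<sigma>" if "\<beta> \<in> K" for \<beta>
    proof -
      have "\<beta> < sqfree_monom \<sigma>"
        using that le_lead_monom[of \<beta> f] assms(3) by (auto simp: K_def)
      then show ?thesis using assms(4) by (intro fun_vector.span_base) (auto dest: less_sqfree_monom)
    qed
    then show "(\<Sum>\<beta>\<in>K. (\<lambda>B. - Poly_Mapping.lookup f \<beta> / c * superset_ind (Poly_Mapping.keys \<beta>) B))
        \<in> lex_span \<sigma>"
      by (intro fun_vector.span_sum fun_vector.span_scale)
    fix B assume "B \<in> bases M"
    then have "0 = eval_mpoly f (char_vec B)" using assms(1) by (simp add: vanishing_ideal_def)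
    also have "\<dots> = c * superset_ind \<sigma> B +
        (\<Sum>\<beta>\<in>K. Poly_Mapping.lookup f \<beta> * superset_ind (Poly_Mapping.keys \<beta>) B)"
      unfolding eval_mpoly_char_vec K_def c_def using in_keys assms(4) by (simp add: sum.remove)
    finally have "c * superset_ind \<sigma> B =
        - (\<Sum>\<beta>\<in>K. Poly_Mapping.lookup f \<beta> * superset_ind (Poly_Mapping.keys \<beta>) B)"
      by (simp add: eq_neg_iff_add_eq_0)
    then have "superset_ind \<sigma> B =
        - (\<Sum>\<beta>\<in>K. Poly_Mapping.lookup f \<beta> * superset_ind (Poly_Mapping.keys \<beta>) B) / c"
      using \<open>c \<noteq> 0\<close> by (metis nonzero_mult_div_cancel_left)
    then show "superset_ind \<sigma> B =
        (\<Sum>\<beta>\<in>K. (\<lambda>B. - Poly_Mapping.lookup f \<beta> / c * superset_ind (Poly_Mapping.keys \<beta>) B)) B"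
      by (simp add: sum_fun_apply sum_negf sum_divide_distrib)
  qed
qed

lemma lead_monom_single_diff:
  fixes p :: mpoly
  assumes less: "\<And>\<alpha>. \<alpha> \<in> Poly_Mapping.keys p \<Longrightarrow> \<alpha> < t"
  shows "Poly_Mapping.single t 1 - p \<noteq> 0" "lead_monom (Poly_Mapping.single t 1 - p) = t"
proof -
  let ?f = "Poly_Mapping.single t 1 - p"
  have "t \<notin> Poly_Mapping.keys p" using less by blast
  then have t: "t \<in> Poly_Mapping.keys ?f" by (simp add: in_keys_iff lookup_minus)
  then show "?f \<noteq> 0" by auto
  have "lead_monom ?f \<in> insert t (Poly_Mapping.keys p)"
    using lead_monom_in_keys[OF \<open>?f \<noteq> 0\<close>] keys_diff[of "Poly_Mapping.single t 1" p] by auto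
  then have "lead_monom ?f = t \<or> lead_monom ?f < t" using less by blast
  then have "lead_monom ?f \<le> t" by (auto simp: le_less)
  moreover have "t \<le> lead_monom ?f" using t by (rule le_lead_monom)
  ultimately show "lead_monom ?f = t" by (rule antisym)
qed

lemma lex_dependent_imp_lead_monom:
  assumes fin: "finite (ground M)" and bases_sub: "\<forall>B\<in>bases M. B \<subseteq> ground M"
    and dep: "lex_dependent (bases M) \<sigma>" and \<sigma>: "\<sigma> \<subseteq> ground M"
  shows "\<exists>f\<in>vanishing_ideal M. f \<noteq> 0 \<and> lead_monom f = sqfree_monom \<sigma>"
proof -
  have "finite \<sigma>" using \<sigma> fin by (rule finite_subset)
  obtain g where g: "g \<in> lex_span \<sigma>" "\<forall>B\<in>bases M. superset_ind \<sigma> B = g B"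
    using dep by (rule lex_dependentE)
  obtain p where p: "\<forall>\<alpha>\<in>Poly_Mapping.keys p. \<exists>\<rho>\<in>{\<rho>. set_lex_less \<rho> \<sigma>}. \<rho> \<subseteq> ground M \<and> \<alpha> = sqfree_monom \<rho>"
    "\<forall>B\<subseteq>ground M. eval_mpoly p (char_vec B) = g B"
    using span_superset_ind_polynomial[OF g(1) fin] by blast
  have p_less: "\<alpha> < sqfree_monom \<sigma>" and p_ground: "Poly_Mapping.keys \<alpha> \<subseteq> ground M"
    if \<alpha>: "\<alpha> \<in> Poly_Mapping.keys p" for \<alpha>
  proof -
    obtain \<rho> where "set_lex_less \<rho> \<sigma>" "\<rho> \<subseteq> ground M" "\<alpha> = sqfree_monom \<rho>"
      using p(1) \<alpha> by auto
    moreover have "finite \<rho>" using \<open>\<rho> \<subseteq> ground M\<close> fin by (rule finite_subset)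
    ultimately show "\<alpha> < sqfree_monom \<sigma>" "Poly_Mapping.keys \<alpha> \<subseteq> ground M"
      using \<open>finite \<sigma>\<close> by (simp_all add: sqfree_monom_less)
  qed
  define f where "f = Poly_Mapping.single (sqfree_monom \<sigma>) 1 - p"
  have keys_f: "Poly_Mapping.keys f \<subseteq> insert (sqfree_monom \<sigma>) (Poly_Mapping.keys p)"
    unfolding f_def using keys_diff[of "Poly_Mapping.single (sqfree_monom \<sigma>) 1" p] by auto
  have "f \<noteq> 0" "lead_monom f = sqfree_monom \<sigma>"
    unfolding f_def using lead_monom_single_diff[OF p_less] by simp_all
  moreover have "f \<in> vanishing_ideal M"
    unfolding vanishing_ideal_def poly_ring_def
  proof (intro CollectI conjI ballI)
    fix \<alpha> assume "\<alpha> \<in> Poly_Mapping.keys f"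
    then have "\<alpha> = sqfree_monom \<sigma> \<or> \<alpha> \<in> Poly_Mapping.keys p" using keys_f by blast
    then show "Poly_Mapping.keys \<alpha> \<subseteq> ground M"
      using p_ground \<sigma> \<open>finite \<sigma>\<close> by auto
  next
    fix B assume "B \<in> bases M"
    then show "eval_mpoly f (char_vec B) = 0"
      using p(2) g(2) bases_sub \<open>finite \<sigma>\<close> by (simp add: f_def eval_mpoly_diff eval_mpoly_single_char_vec)
  qed
  ultimately show ?thesis by blast
qed

lemma initial_ideal_monomialD:
  assumes "monomial_poly t \<in> initial_ideal E I"
  shows "\<exists>f\<in>I. f \<noteq> 0 \<and> (\<exists>\<gamma>. t = \<gamma> + lead_monom f)"
proof -
  obtain T r where T: "monomial_poly t = (\<Sum>g\<in>T. r g * g)" "finite T"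
    "T \<subseteq> {monomial_poly (lead_monom f) | f. f \<in> I \<and> f \<noteq> 0}"
    using assms unfolding initial_ideal_def ideal_gen_def by blast
  have "(\<Sum>g\<in>T. Poly_Mapping.lookup (r g * g) t) = Poly_Mapping.lookup (monomial_poly t) t"
    unfolding T(1) by (simp add: lookup_sum)
  also have "\<dots> \<noteq> 0" by (simp add: monomial_poly_def)
  finally obtain g where g: "g \<in> T" "Poly_Mapping.lookup (r g * g) t \<noteq> 0"
    by (rule sum.not_neutral_contains_not_neutral)
  then obtain f where f: "f \<in> I" "f \<noteq> 0" "g = monomial_poly (lead_monom f)"
    using T(3) by blast
  have "t \<in> Poly_Mapping.keys (r g * g)" using g(2) by (simp add: in_keys_iff)
  then obtain \<gamma> where "t = \<gamma> + lead_monom f"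
    using keys_mult[of "r g" g] f(3) by (auto simp: monomial_poly_def)
  then show ?thesis using f by blast
qed

lemma lead_monom_in_initial_ideal:
  assumes "f \<in> I" "f \<noteq> 0"
  shows "monomial_poly (lead_monom f) \<in> initial_ideal E I"
proof -
  have "(1 :: mpoly) \<in> poly_ring E" by (simp add: poly_ring_def)
  then show ?thesis
    unfolding initial_ideal_def ideal_gen_def using assms
    by (intro CollectI exI[of _ "{monomial_poly (lead_monom f)}"] exI[of _ "\<lambda>_. 1"]) auto
qed

theorem S_lex_eq_lex_standard:
  assumes fin: "finite (ground M)" and bases_sub: "\<forall>B\<in>bases M. B \<subseteq> ground M"
  shows "S_lex M = lex_standard (bases M)"
proof -
  have initial_iff: "monomial_poly (sqfree_monom \<tau>) \<in> initial_ideal (ground M) (vanishing_ideal M)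
      \<longleftrightarrow> lex_dependent (bases M) \<tau>" if \<tau>: "\<tau> \<subseteq> ground M" for \<tau>
  proof
    have "finite \<tau>" using \<tau> fin by (rule finite_subset)
    assume "monomial_poly (sqfree_monom \<tau>) \<in> initial_ideal (ground M) (vanishing_ideal M)"
    then obtain f \<gamma> where f: "f \<in> vanishing_ideal M" "f \<noteq> 0" "sqfree_monom \<tau> = \<gamma> + lead_monom f"
      by (blast dest: initial_ideal_monomialD)
    let ?\<sigma> = "Poly_Mapping.keys (lead_monom f)"
    have "lex_dependent (bases M) ?\<sigma>"
      using f(1,2) sqfree_monom_summand(1)[OF f(3) \<open>finite \<tau>\<close>] by (rule lex_dependent_lead_monom) simp
    then show "lex_dependent (bases M) \<tau>"
      using sqfree_monom_summand(2)[OF f(3) \<open>finite \<tau>\<close>] by (rule lex_dependent_mono)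
  next
    assume "lex_dependent (bases M) \<tau>"
    then obtain f where "f \<in> vanishing_ideal M" "f \<noteq> 0" "lead_monom f = sqfree_monom \<tau>"
      using lex_dependent_imp_lead_monom[OF fin bases_sub _ \<tau>] by blast
    then show "monomial_poly (sqfree_monom \<tau>) \<in> initial_ideal (ground M) (vanishing_ideal M)"
      using lead_monom_in_initial_ideal[of f] by simp
  qed
  have "\<tau> \<subseteq> ground M" if "\<tau> \<in> lex_standard (bases M)" for \<tau>
    by (rule lex_standard_subset[OF _ that]) (simp add: bases_sub)
  then show ?thesis
    unfolding S_lex_def using initial_iff by (auto simp: lex_standard_def)
qed

section \<open>Deletion and contraction of matroids\<close>

lemma ground_deletion [simp]: "ground (deletion M m) = ground M - {m}"
  by (simp add: deletion_def ground_def)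

lemma ground_contraction [simp]: "ground (contraction M m) = ground M - {m}"
  by (simp add: contraction_def ground_def)

lemma bases_deletion:
  "bases (deletion M m) = (if family_deletion (bases M) m = {} then family_contraction (bases M) m
     else family_deletion (bases M) m)"
  by (auto simp: deletion_def bases_def family_deletion_def family_contraction_def)

lemma bases_contraction:
  "bases (contraction M m) = (if family_contraction (bases M) m = {} then family_deletion (bases M) m
     else family_contraction (bases M) m)"
  by (auto simp: contraction_def bases_def family_deletion_def family_contraction_def)

lemma family_deletion_subset_bases: "family_deletion (bases M) m \<subseteq> bases (deletion M m)"
  by (simp add: bases_deletion)

lemma family_contraction_subset_bases: "family_contraction (bases M) m \<subseteq> bases (contraction M m)"
  by (simp add: bases_contraction)

lemma empty_if_family_minors_empty:
  "family_deletion X m = {} \<Longrightarrow> family_contraction X m = {} \<Longrightarrow> X = {}"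
  by (auto simp: family_deletion_def family_contraction_def)

definition basis_exchange :: "'a set set \<Rightarrow> bool" where
  "basis_exchange X \<longleftrightarrow>
     (\<forall>B1\<in>X. \<forall>B2\<in>X. \<forall>x\<in>B1 - B2. \<exists>y\<in>B2 - B1. insert y (B1 - {x}) \<in> X)"

lemma is_matroid_iff:
  "is_matroid M \<longleftrightarrow> finite (ground M) \<and> bases M \<noteq> {} \<and> (\<forall>B\<in>bases M. B \<subseteq> ground M) \<and>
     basis_exchange (bases M)"
  by (simp add: is_matroid_def basis_exchange_def)

lemma basis_exchange_family_deletion:
  assumes "basis_exchange X"
  shows "basis_exchange (family_deletion X m)"
  unfolding basis_exchange_def
proof (intro ballI)
  fix B1 B2 x assume B: "B1 \<in> family_deletion X m" "B2 \<in> family_deletion X m" "x \<in> B1 - B2"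
  then have "B1 \<in> X" "B2 \<in> X" by simp_all
  then obtain y where y: "y \<in> B2 - B1" "insert y (B1 - {x}) \<in> X"
    using assms B(3) unfolding basis_exchange_def by blast
  then have "insert y (B1 - {x}) \<in> family_deletion X m" using B by auto
  then show "\<exists>y\<in>B2 - B1. insert y (B1 - {x}) \<in> family_deletion X m" using y by blast
qed

lemma basis_exchange_family_contraction:
  assumes "basis_exchange X"
  shows "basis_exchange (family_contraction X m)"
  unfolding basis_exchange_def
proof (intro ballI)
  fix B1 B2 x assume B: "B1 \<in> family_contraction X m" "B2 \<in> family_contraction X m" "x \<in> B1 - B2"
  then have "x \<in> insert m B1 - insert m B2" "insert m B1 \<in> X" "insert m B2 \<in> X" by auto
  then obtain y where y: "y \<in> insert m B2 - insert m B1" "insert y (insert m B1 - {x}) \<in> X"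
    using assms unfolding basis_exchange_def by blast
  have "insert m (insert y (B1 - {x})) = insert y (insert m B1 - {x})" using B by auto
  then have "insert y (B1 - {x}) \<in> family_contraction X m" using y B by auto
  then show "\<exists>y\<in>B2 - B1. insert y (B1 - {x}) \<in> family_contraction X m" using y by blast
qed

lemma is_matroid_minor:
  assumes "is_matroid M" "ground N = ground M - {m}" "bases N \<noteq> {}"
    and "bases N = family_deletion (bases M) m \<or> bases N = family_contraction (bases M) m"
  shows "is_matroid N"
proof -
  have "basis_exchange (bases M)" using assms(1) by (simp add: is_matroid_iff)
  then have "basis_exchange (bases N)"
    using assms(4) by (elim disjE) (simp_all add: basis_exchange_family_deletion basis_exchange_family_contraction)
  moreover have "B \<subseteq> ground N" if "B \<in> bases N" for B
  proof -
    have "A \<subseteq> ground M" if "A \<in> bases M" for A using that assms(1) by (simp add: is_matroid_iff)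
    from this[of B] this[of "insert m B"] show ?thesis using \<open>B \<in> bases N\<close> assms(2,4) by auto
  qed
  ultimately show ?thesis using assms(1-3) by (simp add: is_matroid_iff)
qed

lemma is_matroid_deletion: "is_matroid M \<Longrightarrow> is_matroid (deletion M m)"
  by (rule is_matroid_minor[of M _ m]) (auto simp: bases_deletion is_matroid_iff dest: empty_if_family_minors_empty)

lemma is_matroid_contraction: "is_matroid M \<Longrightarrow> is_matroid (contraction M m)"
  by (rule is_matroid_minor[of M _ m]) (auto simp: bases_contraction is_matroid_iff dest: empty_if_family_minors_empty)

lemma bij_betw_family_deletion:
  "bij_betw L (bases (deletion M m)) (lex_standard (bases (deletion M m))) \<Longrightarrow>
   bij_betw L (family_deletion (bases M) m) (lex_standard (family_deletion (bases M) m))"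
  by (cases "family_deletion (bases M) m = {}") (simp_all add: bases_deletion bij_betw_def)

lemma bij_betw_family_contraction:
  "bij_betw L (bases (contraction M m)) (lex_standard (bases (contraction M m))) \<Longrightarrow>
   bij_betw L (family_contraction (bases M) m) (lex_standard (family_contraction (bases M) m))"
  by (cases "family_contraction (bases M) m = {}") (simp_all add: bases_contraction bij_betw_def)

lemma bases_subset_atMost_Max:
  assumes "is_matroid M" "B \<in> bases M"
  shows "B \<subseteq> {..Max (ground M)}"
proof -
  from assms have "finite (ground M)" "B \<subseteq> ground M" by (auto simp: is_matroid_iff)
  then show ?thesis by auto
qed

function lex_bijection :: "matroid \<Rightarrow> nat set \<Rightarrow> nat set" where
  "lex_bijection M =
    (if finite (ground M) \<and> ground M \<noteq> {} then
       lex_glue (Max (ground M)) (bases M)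
         (lex_bijection (deletion M (Max (ground M)))) (lex_bijection (contraction M (Max (ground M))))
     else (\<lambda>_. {}))"
  by pat_completeness auto
termination
  by (relation "measure (\<lambda>M. card (ground M))") (auto simp: card_gt_0_iff)

declare lex_bijection.simps [simp del]

lemma lex_bijection_trivial:
  assumes "\<not> (finite (ground M) \<and> ground M \<noteq> {})"
  shows "lex_bijection M B = {}"
  using assms by (subst lex_bijection.simps) (simp only: if_not_P if_False)

lemma lex_bijection_glue:
  "finite (ground M) \<Longrightarrow> ground M \<noteq> {} \<Longrightarrow> m = Max (ground M) \<Longrightarrow>
   lex_bijection M = lex_glue m (bases M) (lex_bijection (deletion M m)) (lex_bijection (contraction M m))"
  by (subst lex_bijection.simps) simp

lemma lex_bijection_subset: "B \<in> bases M \<Longrightarrow> lex_bijection M B \<subseteq> B"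
proof (induction M arbitrary: B rule: lex_bijection.induct)
  case (1 M)
  show ?case
  proof (cases "finite (ground M) \<and> ground M \<noteq> {}")
    case True
    define m where "m = Max (ground M)"
    have con: "lex_bijection (contraction M m) (B - {m}) \<subseteq> B - {m}" if "m \<in> B"
    proof -
      have "B - {m} \<in> family_contraction (bases M) m" using "1.prems" that by (simp add: insert_absorb)
      then have "B - {m} \<in> bases (contraction M m)" using family_contraction_subset_bases by blast
      then show ?thesis using "1.IH"(2) True by (simp add: m_def)
    qed
    have del: "lex_bijection (deletion M m) B \<subseteq> B" if "m \<notin> B"
    proof -
      have "B \<in> bases (deletion M m)" using "1.prems" that family_deletion_subset_bases by fastforce
      then show ?thesis using "1.IH"(1) True by (simp add: m_def)
    qed
    have "lex_bijection M =
        lex_glue m (bases M) (lex_bijection (deletion M m)) (lex_bijection (contraction M m))"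
      using True m_def by (intro lex_bijection_glue) simp_all
    then show ?thesis
      using con del by (cases "m \<in> B") (simp_all add: lex_glue_def lex_lift_def subset_Diff_insert)
  qed (simp add: lex_bijection_trivial)
qed

lemma bij_betw_lex_bijection:
  "is_matroid M \<Longrightarrow> bij_betw (lex_bijection M) (bases M) (lex_standard (bases M))"
proof (induction M rule: lex_bijection.induct)
  case (1 M)
  then have fin: "finite (ground M)" and sub: "\<And>B. B \<in> bases M \<Longrightarrow> B \<subseteq> ground M"
    by (auto simp: is_matroid_iff)
  show ?case
  proof (cases "ground M = {}")
    case True
    then have "bases M = {{}}" using "1.prems" sub by (auto simp: is_matroid_iff)
    then show ?thesis using True by (simp add: lex_standard_singleton_empty lex_bijection_trivial bij_betw_def)
  next
    case False
    define m where "m = Max (ground M)"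
    have "B \<subseteq> {..m}" if "B \<in> bases M" for B
      using "1.prems" that unfolding m_def by (rule bases_subset_atMost_Max)
    moreover have "bij_betw (lex_bijection (deletion M m)) (family_deletion (bases M) m)
        (lex_standard (family_deletion (bases M) m))"
      using 1 fin False is_matroid_deletion by (auto simp: m_def intro: bij_betw_family_deletion)
    moreover have "bij_betw (lex_bijection (contraction M m)) (family_contraction (bases M) m)
        (lex_standard (family_contraction (bases M) m))"
      using 1 fin False is_matroid_contraction by (auto simp: m_def intro: bij_betw_family_contraction)
    ultimately show ?thesis
      unfolding lex_bijection_glue[OF fin False m_def] by (rule bij_betw_lex_glue)
  qed
qed

lemma good_family_lex_bijection: "good_family lex_bijection"
  unfolding good_family_def Let_def
proof (intro allI impI conjI ballI)
  fix M B assume M: "is_matroid M"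
  then have fin: "finite (ground M)" and sub: "\<forall>B\<in>bases M. B \<subseteq> ground M"
    by (auto simp: is_matroid_iff)
  show "bij_betw (lex_bijection M) (bases M) (S_lex M)"
    using bij_betw_lex_bijection[OF M] S_lex_eq_lex_standard[OF fin sub] by simp
  assume "ground M \<noteq> {}" and B: "B \<in> bases M"
  let ?m = "Max (ground M)"
  have glue: "lex_bijection M =
      lex_glue ?m (bases M) (lex_bijection (deletion M ?m)) (lex_bijection (contraction M ?m))"
    using fin \<open>ground M \<noteq> {}\<close> refl by (rule lex_bijection_glue)
  show "lex_bijection M B \<subseteq> B" using B by (rule lex_bijection_subset)
  show "lex_bijection M B = lex_bijection (deletion M ?m) B" if "?m \<notin> B"
    using that by (simp add: glue lex_glue_def)
  show "lex_bijection M B - {?m} = lex_bijection (contraction M ?m) (B - {?m})" if "?m \<in> B"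
  proof -
    have "B - {?m} \<in> family_contraction (bases M) ?m" using that B by (simp add: insert_absorb)
    then have "B - {?m} \<in> bases (contraction M ?m)" using family_contraction_subset_bases by blast
    then have "lex_bijection (contraction M ?m) (B - {?m}) \<subseteq> B - {?m}" by (rule lex_bijection_subset)
    then have "?m \<notin> lex_bijection (contraction M ?m) (B - {?m})" by blast
    then show "lex_bijection M B - {?m} = lex_bijection (contraction M ?m) (B - {?m})"
      using \<open>?m \<in> B\<close> by (simp add: glue lex_glue_def lex_lift_def)
  qed
qed

lemma good_familyD:
  assumes "good_family \<Lambda>" "is_matroid M"
  shows "bij_betw (\<Lambda> M) (bases M) (S_lex M)"
    and "ground M \<noteq> {} \<Longrightarrow> B \<in> bases M \<Longrightarrow> Max (ground M) \<notin> B \<Longrightarrow>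
      \<Lambda> M B = \<Lambda> (deletion M (Max (ground M))) B"
    and "ground M \<noteq> {} \<Longrightarrow> B \<in> bases M \<Longrightarrow> Max (ground M) \<in> B \<Longrightarrow>
      \<Lambda> M B - {Max (ground M)} = \<Lambda> (contraction M (Max (ground M))) (B - {Max (ground M)})"
  using assms unfolding good_family_def Let_def by blast+

lemma good_family_empty_ground:
  assumes "good_family \<Lambda>" "is_matroid M" "ground M = {}" "B \<in> bases M"
  shows "\<Lambda> M B = {}"
proof -
  have "\<Lambda> M B \<in> S_lex M" using good_familyD(1)[OF assms(1,2)] assms(4) by (auto simp: bij_betw_def)
  then show ?thesis using assms(3) by (simp add: S_lex_def)
qed

lemma good_family_unique:
  assumes "good_family \<Lambda>"
  shows "is_matroid M \<Longrightarrow> B \<in> bases M \<Longrightarrow> \<Lambda> M B = lex_bijection M B"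
proof (induction M arbitrary: B rule: lex_bijection.induct)
  case (1 M)
  note M = "1.prems"(1)
  show ?case
  proof (cases "ground M = {}")
    case True
    then show ?thesis
      using good_family_empty_ground[OF assms M True "1.prems"(2)] by (simp add: lex_bijection_trivial)
  next
    case False
    define m where "m = Max (ground M)"
    have fin: "finite (ground M)" using M by (simp add: is_matroid_iff)
    have "\<Lambda> M B = lex_glue m (bases M) (lex_bijection (deletion M m)) (lex_bijection (contraction M m)) B"
    proof (rule lex_glue_unique)
      show "B' \<subseteq> {..m}" if "B' \<in> bases M" for B'
        using M that unfolding m_def by (rule bases_subset_atMost_Max)
      show "bij_betw (\<Lambda> M) (bases M) (lex_standard (bases M))"
        using good_familyD(1)[OF assms M] S_lex_eq_lex_standard[OF fin] M by (simp add: is_matroid_iff)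
      show "bij_betw (lex_bijection (deletion M m)) (family_deletion (bases M) m)
          (lex_standard (family_deletion (bases M) m))"
        using bij_betw_lex_bijection[OF is_matroid_deletion[OF M]] by (rule bij_betw_family_deletion)
      show "bij_betw (lex_bijection (contraction M m)) (family_contraction (bases M) m)
          (lex_standard (family_contraction (bases M) m))"
        using bij_betw_lex_bijection[OF is_matroid_contraction[OF M]] by (rule bij_betw_family_contraction)
      show "\<Lambda> M B' = lex_bijection (deletion M m) B'" if "B' \<in> bases M" "m \<notin> B'" for B'
      proof -
        have "B' \<in> family_deletion (bases M) m" using that by simp
        then have "B' \<in> bases (deletion M m)" using family_deletion_subset_bases by blast
        then show ?thesis
          using good_familyD(2)[OF assms M False that[unfolded m_def]] "1.IH"(1) fin False
            is_matroid_deletion[OF M] by (simp add: m_def)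
      qed
      show "\<Lambda> M B' - {m} = lex_bijection (contraction M m) (B' - {m})" if "B' \<in> bases M" "m \<in> B'" for B'
      proof -
        have "B' - {m} \<in> family_contraction (bases M) m" using that by (simp add: insert_absorb)
        then have "B' - {m} \<in> bases (contraction M m)" using family_contraction_subset_bases by blast
        then show ?thesis
          using good_familyD(3)[OF assms M False that[unfolded m_def]] "1.IH"(2) fin False
            is_matroid_contraction[OF M] by (simp add: m_def)
      qed
    qed (rule "1.prems"(2))
    then show ?thesis using lex_bijection_glue[OF fin False m_def] by simp
  qed
qed

theorem corollary1p2:
  shows "\<exists>\<Lambda>. good_family \<Lambda> \<and>
    (\<forall>\<Lambda>'. good_family \<Lambda>' \<longrightarrow>
       (\<forall>M. is_matroid M \<longrightarrow> (\<forall>B\<in>bases M. \<Lambda>' M B = \<Lambda> M B)))"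
  using good_family_lex_bijection good_family_unique by blast

end
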